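(* Let $n,k\in\mathbb N$ with $k\ge 2$, and let $b=n^k+1$. Then for every $m\in\{2,3,\dots,n\}$, the number $(m\cdot n)^k$ is antipalindromic in base $b$.
   Context: For an integer $b\ge 2$, every natural number $x$ has a unique base-$b$ expansion $x=a_\ell b^\ell+\dots+a_1b+a_0$ with $a_0,\dots,a_\ell\in\{0,1,\dots,b-1\}$ and $a_\ell\neq 0$. The number $x$ is antipalindromic in base $b$ if $a_j=b-1-a_{\ell-j}$ for all $j\in\{0,1,\dots,\ell\}$. *)

theory Defs
  imports Main
begin

definition is_base_expansion :: "nat \<Rightarrow> nat \<Rightarrow> nat \<Rightarrow> (nat \<Rightarrow> nat) \<Rightarrow> bool" where
  "is_base_expansion b x l a \<longleftrightarrow>
     x = (\<Sum>j\<le>l. a j * b ^ j) \<and> (\<forall>j\<le>l. a j < b) \<and> a l \<noteq> 0"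

definition antipalindromic :: "nat \<Rightarrow> nat \<Rightarrow> bool" where
  "antipalindromic b x \<longleftrightarrow>
     (\<exists>l a. is_base_expansion b x l a \<and> (\<forall>j\<le>l. a j = b - 1 - a (l - j)))"

end

theory Submission
  imports Defs
begin

text \<open>Writing \<open>b = n^k + 1\<close> and \<open>M = m^k\<close>, we have \<open>(m n)^k = M (b - 1) = (M - 1) b + (b - M)\<close>:
  a two-digit number in base \<open>b\<close> whose digits \<open>M - 1\<close> and \<open>b - M\<close> add up to \<open>b - 1\<close>.
  The hypothesis \<open>k \<ge> 2\<close> is only used in the weaker form \<open>k \<ge> 1\<close>.\<close>

lemma antipalindromic_two_digits:
  fixes b d :: nat
  assumes "0 < d" and "d < b"
  shows "antipalindromic b (d * b + (b - 1 - d))"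
proof -
  define a where "a j = (if j = 0 then b - 1 - d else d)" for j :: nat
  have "is_base_expansion b (d * b + (b - 1 - d)) 1 a"
    unfolding is_base_expansion_def a_def using assms by auto
  moreover have "\<forall>j\<le>1. a j = b - 1 - a (1 - j)"
    unfolding a_def using assms by auto
  ultimately show ?thesis
    unfolding antipalindromic_def by blast
qed

lemma antipalindromic_mult_base_minus_one:
  fixes b M :: nat
  assumes "2 \<le> M" and "M \<le> b"
  shows "antipalindromic b (M * (b - 1))"
proof -
  have "M * (b - 1) = (M - 1) * b + (b - 1 - (M - 1))"
    using assms by (simp add: algebra_simps diff_mult_distrib diff_mult_distrib2)
  then show ?thesis
    using antipalindromic_two_digits[of "M - 1" b] assms by simp
qed

theorem mainTheorem11:
  fixes n k m :: nat
  assumes "k \<ge> 2" and "2 \<le> m" and "m \<le> n"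
  shows "antipalindromic (n ^ k + 1) ((m * n) ^ k)"
proof -
  have "m ^ 1 \<le> m ^ k"
    using assms by (intro power_increasing) auto
  then have "2 \<le> m ^ k"
    using assms(2) by simp
  moreover have "m ^ k \<le> n ^ k + 1"
    using assms(3) power_mono[of m n k] by simp
  ultimately have "antipalindromic (n ^ k + 1) (m ^ k * (n ^ k + 1 - 1))"
    by (rule antipalindromic_mult_base_minus_one)
  then show ?thesis
    by (simp add: power_mult_distrib)
qed

end
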